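(* In the algorithm setup, let $R(\mathbf z^L)\in\{\pm1\}^V$ be the randomized rounding of $\mathbf z^L=(z^L_i)_{i\in V}$. Then there is a constant $C$, independent of $n=|V|$, such that for all $t\ge0$, $$\mathbb P\Big(\Big|\frac1{\alpha n}\sum_{a\in E}\big(f(R(\mathbf z^L)_{\partial a})-\mathbb E[f(R(\mathbf z^L)_{\partial a})]\big)\Big|\ge t\Big)\le C e^{-nt^2/(2C)},$$ where $\alpha=d/r$, the probability being over the Gaussians $z^0$ and the rounding.
   Context: Algorithm setup. Fix $r\ge2$ and a predicate $f:\{\pm1\}^r\to\{0,1\}$, identified with its multilinear extension $f(x)=\sum_{S\subseteq[r]}\hat f(S)\prod_{\iota\in S}x_\iota$ on $\mathbb R^r$, and assume $\hat f(S)=0$ whenever $|S|=1$. Fix $\delta>0$ and let $L=\lfloor1/\delta\rfloor$. Let $G=(V,E)$ be a hypergraph whose hyperedges (factors) $a$ are ordered $r$-tuples $\partial a=(v_{a,1},\dots,v_{a,r})$ of distinct vertices (variables), which is $d$-index-regular: every variable lies in exactly $d$ factors, and for each $\iota\in[r]$ it is the $\iota$-th entry of exactly $d/r$ factors. Write $\partial i$ for the set of factors containing $i$. Assume the bipartite variable–factor incidence graph (factor graph) of $G$ has no cycle of length less than $4L+4$. For a factor $a$ and $j\in\partial a$, $\mathsf D_{j;a}f$ is the partial derivative of (multilinear) $f$ in the coordinate $\iota$ with $v_{a,\iota}=j$. Fix $K>0$ and functions $F_{\to,\ell},F_\ell:\mathbb R^\ell\to[-K,K]$ for $0\le\ell\le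 L-1$ (constants when $\ell=0$). Randomness: $z_i^0$, $i\in V$, i.i.d. $\mathcal N(0,\delta)$; set $z^0_{i\to a}=z_i^0$, $w_i^0=w^0_{i\to a}=0$. For $\ell=0,\dots,L-1$: $A^\ell_{i\to a}=F_{\to,\ell}(u^1_{i\to a},\dots,u^\ell_{i\to a})$, $A^\ell_i=F_\ell(u^1_i,\dots,u^\ell_i)$; with $\mathbf z^\ell_{\partial b\to b}=(z^\ell_{v_{b,1}\to b},\dots,z^\ell_{v_{b,r}\to b})$, $w^{\ell+1}_{i\to a}=(d-1)^{-1/2}\sum_{b\in\partial i\setminus a}\mathsf D_{i;b}f(\mathbf z^\ell_{\partial b\to b})$, $u^{\ell+1}_{i\to a}=w^{\ell+1}_{i\to a}-w^\ell_{i\to a}$, $z^{\ell+1}_{i\to a}=z_i^0+\sum_{s=1}^{\ell+1}A^{s-1}_{i\to a}u^s_{i\to a}$; $w^{\ell+1}_i=d^{-1/2}\sum_{b\in\partial i}\mathsf D_{i;b}f(\mathbf z^\ell_{\partial b\to b})$, $u^{\ell+1}_i=w^{\ell+1}_i-w^\ell_i$, $z^{\ell+1}_i=z_i^0+\sum_{s=1}^{\ell+1}A^{s-1}_iu^s_i$. Rounding: $\mathrm{trnc}(x)=\max(-1,\min(1,x))$; $R$ acts independently on each vertex, setting $R(\mathbf z^L)_i=+1$ with probability $(1+\mathrm{trnc}(z^L_i))/2$ and $-1$ otherwise; $R(\mathbf z^L)_{\partial a}$ is the restriction to the ordered tuple $\partial a$. *)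

theory Defs
  imports "HOL-Probability.Probability"
begin

(* Conventions: vertices are {..<n}, factors are {..<m}; factor a has ordered
   tuple (edge a 0, ..., edge a (r-1)) (positions 0-based).
   Points of R^r / {+-1}^r are functions nat => real that vanish for indices >= r. *)

definition pm_cube :: "nat \<Rightarrow> (nat \<Rightarrow> real) set" where
  "pm_cube r = {x. (\<forall>\<iota><r. x \<iota> = 1 \<or> x \<iota> = -1) \<and> (\<forall>\<iota>. r \<le> \<iota> \<longrightarrow> x \<iota> = 0)}"

definition fourier_coeff :: "nat \<Rightarrow> ((nat \<Rightarrow> real) \<Rightarrow> real) \<Rightarrow> nat set \<Rightarrow> real" where
  "fourier_coeff r f S = (\<Sum>x\<in>pm_cube r. f x * (\<Prod>\<iota>\<in>S. x \<iota>)) / 2 ^ r"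

definition mlext :: "nat \<Rightarrow> ((nat \<Rightarrow> real) \<Rightarrow> real) \<Rightarrow> (nat \<Rightarrow> real) \<Rightarrow> real" where
  "mlext r f y = (\<Sum>S\<in>Pow {..<r}. fourier_coeff r f S * (\<Prod>\<iota>\<in>S. y \<iota>))"

definition pderiv_ml :: "nat \<Rightarrow> ((nat \<Rightarrow> real) \<Rightarrow> real) \<Rightarrow> nat \<Rightarrow> (nat \<Rightarrow> real) \<Rightarrow> real" where
  "pderiv_ml r f \<iota> y = deriv (\<lambda>s. mlext r f (y(\<iota> := s))) (y \<iota>)"

definition Dfac :: "nat \<Rightarrow> ((nat \<Rightarrow> real) \<Rightarrow> real) \<Rightarrow> (nat \<Rightarrow> nat \<Rightarrow> nat) \<Rightarrow> nat \<Rightarrow> nat \<Rightarrow> (nat \<Rightarrow> real) \<Rightarrow> real" where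
  "Dfac r f edge a j y = pderiv_ml r f (THE \<iota>. \<iota> < r \<and> edge a \<iota> = j) y"

definition nbr_factors :: "nat \<Rightarrow> nat \<Rightarrow> (nat \<Rightarrow> nat \<Rightarrow> nat) \<Rightarrow> nat \<Rightarrow> nat set" where
  "nbr_factors r m edge i = {b. b < m \<and> i \<in> edge b ` {..<r}}"

definition index_regular :: "nat \<Rightarrow> nat \<Rightarrow> nat \<Rightarrow> nat \<Rightarrow> (nat \<Rightarrow> nat \<Rightarrow> nat) \<Rightarrow> bool" where
  "index_regular r d n m edge \<longleftrightarrow>
     (\<forall>a<m. inj_on (edge a) {..<r} \<and> edge a ` {..<r} \<subseteq> {..<n}) \<and>
     r dvd d \<and>
     (\<forall>i<n. card (nbr_factors r m edge i) = d) \<and>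
     (\<forall>i<n. \<forall>\<iota><r. card {a. a < m \<and> edge a \<iota> = i} = d div r)"

(* a cycle of length 2k in the bipartite variable-factor incidence graph *)
definition fg_cycle :: "nat \<Rightarrow> nat \<Rightarrow> nat \<Rightarrow> (nat \<Rightarrow> nat \<Rightarrow> nat) \<Rightarrow> nat \<Rightarrow> (nat \<Rightarrow> nat) \<Rightarrow> (nat \<Rightarrow> nat) \<Rightarrow> bool" where
  "fg_cycle r n m edge k vs fs \<longleftrightarrow>
     2 \<le> k \<and> inj_on vs {..<k} \<and> inj_on fs {..<k} \<and>
     (\<forall>j<k. vs j < n \<and> fs j < m \<and> vs j \<in> edge (fs j) ` {..<r}
            \<and> vs (Suc j mod k) \<in> edge (fs j) ` {..<r})"

definition fg_girth_ge :: "nat \<Rightarrow> nat \<Rightarrow> nat \<Rightarrow> (nat \<Rightarrow> nat \<Rightarrow> nat) \<Rightarrow> nat \<Rightarrow> bool" where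
  "fg_girth_ge r n m edge g \<longleftrightarrow> (\<forall>k vs fs. fg_cycle r n m edge k vs fs \<longrightarrow> g \<le> 2 * k)"

(* z-value computed from a history w of w's:
   z^l = z0 + sum_{s=1}^l F_{s-1}(u^1,...,u^{s-1}) u^s,  u^s = w^s - w^(s-1);
   the argument (u^1..u^{s-1}) in R^{s-1} is the extensional function on {..<s-1} *)
definition z_of :: "(nat \<Rightarrow> (nat \<Rightarrow> real) \<Rightarrow> real) \<Rightarrow> real \<Rightarrow> (nat \<Rightarrow> real) \<Rightarrow> nat \<Rightarrow> real" where
  "z_of Fs z0 w l = z0 + (\<Sum>s\<in>{1..l}. Fs (s - 1) (\<lambda>q\<in>{..<s - 1}. w (Suc q) - w q) * (w s - w (s - 1)))"

definition msg_tuple :: "nat \<Rightarrow> (nat \<Rightarrow> nat \<Rightarrow> nat) \<Rightarrow> (nat \<Rightarrow> (nat \<Rightarrow> real) \<Rightarrow> real) \<Rightarrow> (nat \<Rightarrow> real)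
     \<Rightarrow> (nat \<Rightarrow> nat \<Rightarrow> nat \<Rightarrow> real) \<Rightarrow> nat \<Rightarrow> nat \<Rightarrow> (nat \<Rightarrow> real)" where
  "msg_tuple r edge Fto z0 w l b =
     (\<lambda>\<iota>. if \<iota> < r then z_of Fto (z0 (edge b \<iota>)) (\<lambda>s. w s (edge b \<iota>) b) l else 0)"

(* w^{l+1}_{i->a} computed from the history w (w s i a = w^s_{i->a}) *)
definition msg_update :: "nat \<Rightarrow> ((nat \<Rightarrow> real) \<Rightarrow> real) \<Rightarrow> nat \<Rightarrow> (nat \<Rightarrow> nat \<Rightarrow> nat) \<Rightarrow> nat
     \<Rightarrow> (nat \<Rightarrow> (nat \<Rightarrow> real) \<Rightarrow> real) \<Rightarrow> (nat \<Rightarrow> real) \<Rightarrow> (nat \<Rightarrow> nat \<Rightarrow> nat \<Rightarrow> real) \<Rightarrow> nat \<Rightarrow> nat \<Rightarrow> nat \<Rightarrow> real" where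
  "msg_update r f m edge d Fto z0 w l i a =
     (\<Sum>b\<in>nbr_factors r m edge i - {a}. Dfac r f edge b i (msg_tuple r edge Fto z0 w l b)) / sqrt (real d - 1)"

(* wmsg ... l s i a = w^s_{i->a}, valid for s <= l *)
primrec wmsg :: "nat \<Rightarrow> ((nat \<Rightarrow> real) \<Rightarrow> real) \<Rightarrow> nat \<Rightarrow> (nat \<Rightarrow> nat \<Rightarrow> nat) \<Rightarrow> nat
     \<Rightarrow> (nat \<Rightarrow> (nat \<Rightarrow> real) \<Rightarrow> real) \<Rightarrow> (nat \<Rightarrow> real) \<Rightarrow> nat \<Rightarrow> nat \<Rightarrow> nat \<Rightarrow> nat \<Rightarrow> real" where
  "wmsg r f m edge d Fto z0 0 = (\<lambda>s i a. 0)"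
| "wmsg r f m edge d Fto z0 (Suc l) =
     (\<lambda>s i a. if s \<le> l then wmsg r f m edge d Fto z0 l s i a
              else msg_update r f m edge d Fto z0 (wmsg r f m edge d Fto z0 l) l i a)"

definition wvert :: "nat \<Rightarrow> ((nat \<Rightarrow> real) \<Rightarrow> real) \<Rightarrow> nat \<Rightarrow> (nat \<Rightarrow> nat \<Rightarrow> nat) \<Rightarrow> nat
     \<Rightarrow> (nat \<Rightarrow> (nat \<Rightarrow> real) \<Rightarrow> real) \<Rightarrow> (nat \<Rightarrow> real) \<Rightarrow> nat \<Rightarrow> nat \<Rightarrow> nat \<Rightarrow> real" where
  "wvert r f m edge d Fto z0 L s i =
     (if s = 0 then 0 else
      (\<Sum>b\<in>nbr_factors r m edge i.
          Dfac r f edge b i (msg_tuple r edge Fto z0 (wmsg r f m edge d Fto z0 L) (s - 1) b)) / sqrt (real d))"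

definition zfinal :: "nat \<Rightarrow> ((nat \<Rightarrow> real) \<Rightarrow> real) \<Rightarrow> nat \<Rightarrow> (nat \<Rightarrow> nat \<Rightarrow> nat) \<Rightarrow> nat
     \<Rightarrow> (nat \<Rightarrow> (nat \<Rightarrow> real) \<Rightarrow> real) \<Rightarrow> (nat \<Rightarrow> (nat \<Rightarrow> real) \<Rightarrow> real) \<Rightarrow> (nat \<Rightarrow> real) \<Rightarrow> nat \<Rightarrow> nat \<Rightarrow> real" where
  "zfinal r f m edge d Fto F z0 L i = z_of F (z0 i) (\<lambda>s. wvert r f m edge d Fto z0 L s i) L"

definition trnc :: "real \<Rightarrow> real" where
  "trnc x = max (-1) (min 1 x)"

(* randomized rounding realised with independent uniforms U_i on [0,1]:
   R_i = +1 iff U_i <= (1 + trnc z_i)/2, so P(R_i = 1 | z) = (1 + trnc z_i)/2 *)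
definition round_R :: "(nat \<Rightarrow> real) \<Rightarrow> (nat \<Rightarrow> real) \<Rightarrow> nat \<Rightarrow> real" where
  "round_R z U i = (if U i \<le> (1 + trnc (z i)) / 2 then 1 else -1)"

definition alg_space :: "real \<Rightarrow> nat \<Rightarrow> ((nat \<Rightarrow> real) \<times> (nat \<Rightarrow> real)) measure" where
  "alg_space \<delta> n =
     (PiM {..<n} (\<lambda>_. density lborel (normal_density 0 (sqrt \<delta>))))
     \<Otimes>\<^sub>M (PiM {..<n} (\<lambda>_. uniform_measure lborel {0..1}))"

definition factor_value :: "nat \<Rightarrow> ((nat \<Rightarrow> real) \<Rightarrow> real) \<Rightarrow> nat \<Rightarrow> (nat \<Rightarrow> nat \<Rightarrow> nat) \<Rightarrow> nat
     \<Rightarrow> (nat \<Rightarrow> (nat \<Rightarrow> real) \<Rightarrow> real) \<Rightarrow> (nat \<Rightarrow> (nat \<Rightarrow> real) \<Rightarrow> real) \<Rightarrow> nat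
     \<Rightarrow> (nat \<Rightarrow> real) \<times> (nat \<Rightarrow> real) \<Rightarrow> nat \<Rightarrow> real" where
  "factor_value r f m edge d Fto F L \<omega> a =
     f (\<lambda>\<iota>. if \<iota> < r
            then round_R (\<lambda>i. zfinal r f m edge d Fto F (fst \<omega>) L i) (snd \<omega>) (edge a \<iota>)
            else 0)"

end

theory Submission
  imports Defs
begin

text \<open>The algorithm is local: the rounded value of a factor \<open>a\<close> is a function of the Gaussians
  and rounding uniforms in the ball of radius \<open>L + 2\<close> around the first variable of \<open>a\<close> (two
  variables being adjacent when they share a factor), whose size is
  bounded in terms of \<open>d\<close>, \<open>r\<close> and \<open>L\<close> only. Colouring the factors greedily so that factors of
  the same colour have disjoint balls needs a number \<open>N\<close> of colours independent of \<open>n\<close>; within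
  a colour class the factor values are independent and lie in \<open>[0, 1]\<close>, so Hoeffding's inequality
  applies to each class, and a union bound over the \<open>N\<close> classes gives the Gaussian tail.\<close>

section \<open>Balls in the factor graph\<close>

definition fg_nbhd :: "nat \<Rightarrow> nat \<Rightarrow> (nat \<Rightarrow> nat \<Rightarrow> nat) \<Rightarrow> nat \<Rightarrow> nat set" where
  "fg_nbhd r m edge u = insert u (\<Union>b\<in>nbr_factors r m edge u. edge b ` {..<r})"

fun fg_ball :: "nat \<Rightarrow> nat \<Rightarrow> (nat \<Rightarrow> nat \<Rightarrow> nat) \<Rightarrow> nat \<Rightarrow> nat \<Rightarrow> nat set" where
  "fg_ball r m edge 0 v = {v}"
| "fg_ball r m edge (Suc k) v = (\<Union>u\<in>fg_ball r m edge k v. fg_nbhd r m edge u)"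

lemma fg_ball_add: "fg_ball r m edge (j + k) v = (\<Union>u\<in>fg_ball r m edge j v. fg_ball r m edge k u)"
  by (induction k) auto

lemma fg_ball_Suc_left: "fg_ball r m edge (Suc k) v = (\<Union>u\<in>fg_nbhd r m edge v. fg_ball r m edge k u)"
  using fg_ball_add[of r m edge 1 k v] by simp

lemma centre_in_fg_ball: "v \<in> fg_ball r m edge k v"
  by (induction k) (auto simp: fg_nbhd_def)

lemma fg_ball_mono_Suc: "fg_ball r m edge k v \<subseteq> fg_ball r m edge (Suc k) v"
  by (auto simp: fg_nbhd_def)

lemma fg_nbhd_sym: "w \<in> fg_nbhd r m edge u \<Longrightarrow> u \<in> fg_nbhd r m edge w"
  by (auto simp: fg_nbhd_def nbr_factors_def)

lemma fg_ball_sym: "u \<in> fg_ball r m edge k v \<Longrightarrow> v \<in> fg_ball r m edge k u"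
proof (induction k arbitrary: u)
  case (Suc k)
  then obtain w where "w \<in> fg_ball r m edge k v" "u \<in> fg_nbhd r m edge w" by auto
  with Suc.IH fg_nbhd_sym show ?case unfolding fg_ball_Suc_left by blast
qed simp

lemma fg_balls_intersect:
  "u \<in> fg_ball r m edge k v \<Longrightarrow> u \<in> fg_ball r m edge k w \<Longrightarrow> w \<in> fg_ball r m edge (k + k) v"
  using fg_ball_add[of r m edge k k v] fg_ball_sym[of u r m edge k w] by auto

lemma edge_in_fg_nbhd: "b \<in> nbr_factors r m edge u \<Longrightarrow> \<iota> < r \<Longrightarrow> edge b \<iota> \<in> fg_nbhd r m edge u"
  by (auto simp: fg_nbhd_def)

lemma fg_ball_edge_subset:
  assumes "b \<in> nbr_factors r m edge u" "\<iota> < r"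
  shows "fg_ball r m edge k (edge b \<iota>) \<subseteq> fg_ball r m edge (Suc k) u"
  using edge_in_fg_nbhd[OF assms] unfolding fg_ball_Suc_left by blast

lemma finite_nbr_factors: "finite (nbr_factors r m edge u)"
  by (rule finite_subset[of _ "{..<m}"]) (auto simp: nbr_factors_def)

lemma finite_fg_ball: "finite (fg_ball r m edge k v)"
  by (induction k) (auto simp: fg_nbhd_def finite_nbr_factors)

section \<open>Counting in an index-regular hypergraph\<close>

context
  fixes r d n m :: nat and edge :: "nat \<Rightarrow> nat \<Rightarrow> nat"
  assumes reg: "index_regular r d n m edge"
begin

lemma edge_lessThan_n: "a < m \<Longrightarrow> \<iota> < r \<Longrightarrow> edge a \<iota> < n"
  using reg unfolding index_regular_def by blast

lemma card_nbr_factors_le: "card (nbr_factors r m edge u) \<le> d"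
proof (cases "u < n")
  case False
  then have "nbr_factors r m edge u = {}"
    using edge_lessThan_n by (auto simp: nbr_factors_def)
  then show ?thesis by simp
qed (use reg in \<open>auto simp: index_regular_def\<close>)

lemma card_fg_nbhd_le: "card (fg_nbhd r m edge u) \<le> 1 + d * r"
proof -
  have "card (\<Union>b\<in>nbr_factors r m edge u. edge b ` {..<r}) \<le> (\<Sum>b\<in>nbr_factors r m edge u. card (edge b ` {..<r}))"
    by (rule card_UN_le[OF finite_nbr_factors])
  also have "\<dots> \<le> card (nbr_factors r m edge u) * r"
    using sum_mono[of _ "\<lambda>b. card (edge b ` {..<r})" "\<lambda>_. r"]
    by (simp add: card_image_le[of "{..<r}", simplified])
  also have "\<dots> \<le> d * r"
    using card_nbr_factors_le by simp
  finally have "card (\<Union>b\<in>nbr_factors r m edge u. edge b ` {..<r}) \<le> d * r" .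
  moreover have "card (fg_nbhd r m edge u) \<le> 1 + card (\<Union>b\<in>nbr_factors r m edge u. edge b ` {..<r})"
    unfolding fg_nbhd_def by (simp add: card_insert_if finite_nbr_factors)
  ultimately show ?thesis by linarith
qed

lemma card_fg_ball_le: "card (fg_ball r m edge k v) \<le> (1 + d * r) ^ k"
proof (induction k)
  case (Suc k)
  have "card (fg_ball r m edge (Suc k) v) \<le> (\<Sum>u\<in>fg_ball r m edge k v. card (fg_nbhd r m edge u))"
    by (simp add: card_UN_le finite_fg_ball)
  also have "\<dots> \<le> card (fg_ball r m edge k v) * (1 + d * r)"
    using sum_mono[OF card_fg_nbhd_le] by simp
  also have "\<dots> \<le> (1 + d * r) ^ Suc k"
    using Suc.IH by (metis mult.commute mult_le_mono1 power_Suc)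
  finally show ?case .
qed simp

lemma card_factors_at_le:
  assumes "0 < r"
  shows "card {a. a < m \<and> edge a 0 = u} \<le> d div r"
proof (cases "u < n")
  case False
  then have "{a. a < m \<and> edge a 0 = u} = {}"
    using edge_lessThan_n[OF _ assms] by fastforce
  then show ?thesis by (simp only: card.empty)
qed (use reg assms in \<open>auto simp: index_regular_def\<close>)

lemma num_factors_eq:
  assumes "0 < r"
  shows "m = n * (d div r)"
proof -
  have "{..<m} = (\<Union>u\<in>{..<n}. {a. a < m \<and> edge a 0 = u})"
    using edge_lessThan_n[OF _ assms] by auto
  then have "card {..<m} = (\<Sum>u\<in>{..<n}. card {a. a < m \<and> edge a 0 = u})"
    by (simp only:) (rule card_UN_disjoint, auto)
  also have "\<dots> = (\<Sum>u\<in>{..<n}. d div r)"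
    using reg assms unfolding index_regular_def by (intro sum.cong) auto
  finally show ?thesis by simp
qed

end

section \<open>Locality of the message-passing algorithm\<close>

lemma msg_tuple_cong:
  assumes "\<And>\<iota>. \<iota> < r \<Longrightarrow> z (edge b \<iota>) = z' (edge b \<iota>)"
    and "\<And>\<iota> s. \<iota> < r \<Longrightarrow> w s (edge b \<iota>) b = w' s (edge b \<iota>) b"
  shows "msg_tuple r edge Fto z w l b = msg_tuple r edge Fto z' w' l b"
  using assms by (auto simp: msg_tuple_def fun_eq_iff)

lemma wmsg_local:
  assumes "\<forall>x\<in>fg_ball r m edge l i. z x = z' x"
  shows "wmsg r f m edge d Fto z l s i a = wmsg r f m edge d Fto z' l s i a"
  using assms
proof (induction l arbitrary: s i a)
  case (Suc l)
  have "msg_update r f m edge d Fto z (wmsg r f m edge d Fto z l) l i a =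
        msg_update r f m edge d Fto z' (wmsg r f m edge d Fto z' l) l i a"
    unfolding msg_update_def
  proof (intro arg_cong2[where f="(/)"] sum.cong refl arg_cong[where f="Dfac r f edge _ i"] msg_tuple_cong)
    fix b \<iota> s assume b: "b \<in> nbr_factors r m edge i - {a}" and \<iota>: "\<iota> < r"
    have "edge b \<iota> \<in> fg_ball r m edge (Suc l) i"
      using fg_ball_edge_subset[of b r m edge i \<iota> l] b \<iota> centre_in_fg_ball by blast
    then show "z (edge b \<iota>) = z' (edge b \<iota>)"
      using Suc.prems by blast
    show "wmsg r f m edge d Fto z l s (edge b \<iota>) b = wmsg r f m edge d Fto z' l s (edge b \<iota>) b"
      using Suc fg_ball_edge_subset[of b r m edge i \<iota> l] b \<iota> by blast
  qed
  moreover have "wmsg r f m edge d Fto z l s i a = wmsg r f m edge d Fto z' l s i a"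
    using Suc fg_ball_mono_Suc[of r m edge l i] by (meson subsetD)
  ultimately show ?case
    by simp
qed simp

lemma wvert_local:
  assumes "\<forall>x\<in>fg_ball r m edge (Suc L) i. z x = z' x"
  shows "wvert r f m edge d Fto z L s i = wvert r f m edge d Fto z' L s i"
  unfolding wvert_def
proof (intro if_cong refl arg_cong2[where f="(/)"] sum.cong arg_cong[where f="Dfac r f edge _ i"] msg_tuple_cong)
  fix b \<iota> s' assume b: "b \<in> nbr_factors r m edge i" and \<iota>: "\<iota> < r"
  have "edge b \<iota> \<in> fg_ball r m edge (Suc L) i"
    using fg_ball_edge_subset[OF b \<iota>, of L] centre_in_fg_ball by blast
  then show "z (edge b \<iota>) = z' (edge b \<iota>)"
    using assms by blast
  show "wmsg r f m edge d Fto z L s' (edge b \<iota>) b = wmsg r f m edge d Fto z' L s' (edge b \<iota>) b"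
    using assms fg_ball_edge_subset[OF b \<iota>, of L] by (intro wmsg_local) blast
qed

lemma zfinal_local:
  assumes "\<forall>x\<in>fg_ball r m edge (Suc L) i. z x = z' x"
  shows "zfinal r f m edge d Fto F z L i = zfinal r f m edge d Fto F z' L i"
proof -
  have "z i = z' i"
    using assms centre_in_fg_ball[of i r m edge "Suc L"] by blast
  then show ?thesis
    unfolding zfinal_def using wvert_local[OF assms] by presburger
qed

lemma factor_value_local:
  assumes a: "a < m" and r: "0 < r"
    and eq: "\<forall>x\<in>fg_ball r m edge (Suc (Suc L)) (edge a 0). fst \<omega> x = fst \<omega>' x \<and> snd \<omega> x = snd \<omega>' x"
  shows "factor_value r f m edge d Fto F L \<omega> a = factor_value r f m edge d Fto F L \<omega>' a"
  unfolding factor_value_def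
proof (intro arg_cong[where f=f] ext if_cong refl)
  fix \<iota> assume \<iota>: "\<iota> < r"
  have "a \<in> nbr_factors r m edge (edge a 0)"
    using a r by (auto simp: nbr_factors_def)
  from fg_ball_edge_subset[OF this \<iota>]
  have sub: "fg_ball r m edge (Suc L) (edge a \<iota>) \<subseteq> fg_ball r m edge (Suc (Suc L)) (edge a 0)" .
  then have "zfinal r f m edge d Fto F (fst \<omega>) L (edge a \<iota>) = zfinal r f m edge d Fto F (fst \<omega>') L (edge a \<iota>)"
    using eq by (intro zfinal_local) blast
  moreover have "snd \<omega> (edge a \<iota>) = snd \<omega>' (edge a \<iota>)"
    using eq sub centre_in_fg_ball by blast
  ultimately show "round_R (\<lambda>i. zfinal r f m edge d Fto F (fst \<omega>) L i) (snd \<omega>) (edge a \<iota>) =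
        round_R (\<lambda>i. zfinal r f m edge d Fto F (fst \<omega>') L i) (snd \<omega>') (edge a \<iota>)"
    by (simp add: round_R_def)
qed

section \<open>Measurability\<close>

text \<open>\<open>Dfac\<close> is defined through \<open>deriv\<close>; its closed form shows that it is a polynomial in the
  coordinates, hence measurable.\<close>

definition ml_partial :: "nat \<Rightarrow> ((nat \<Rightarrow> real) \<Rightarrow> real) \<Rightarrow> nat \<Rightarrow> (nat \<Rightarrow> real) \<Rightarrow> real" where
  "ml_partial r f \<iota> y = (\<Sum>S\<in>{S\<in>Pow {..<r}. \<iota> \<in> S}. fourier_coeff r f S * (\<Prod>\<kappa>\<in>S - {\<iota>}. y \<kappa>))"

lemma mlext_fun_upd:
  "mlext r f (y(\<iota> := s)) =
     (\<Sum>S\<in>{S\<in>Pow {..<r}. \<iota> \<notin> S}. fourier_coeff r f S * (\<Prod>\<kappa>\<in>S. y \<kappa>)) + s * ml_partial r f \<iota> y"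
proof -
  have "fourier_coeff r f S * (\<Prod>\<kappa>\<in>S. (y(\<iota> := s)) \<kappa>) =
        (if \<iota> \<in> S then s * (fourier_coeff r f S * (\<Prod>\<kappa>\<in>S - {\<iota>}. y \<kappa>))
         else fourier_coeff r f S * (\<Prod>\<kappa>\<in>S. y \<kappa>))"
    if "S \<in> Pow {..<r}" for S
  proof -
    have "finite S"
      using that finite_subset by auto
    then show ?thesis
      by (auto simp: prod.remove intro!: prod.cong)
  qed
  then have "mlext r f (y(\<iota> := s)) =
      (\<Sum>S\<in>Pow {..<r}. if \<iota> \<in> S then s * (fourier_coeff r f S * (\<Prod>\<kappa>\<in>S - {\<iota>}. y \<kappa>))
                        else fourier_coeff r f S * (\<Prod>\<kappa>\<in>S. y \<kappa>))"
    unfolding mlext_def by (rule sum.cong[OF refl])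
  also have "\<dots> = s * ml_partial r f \<iota> y +
      (\<Sum>S\<in>{S\<in>Pow {..<r}. \<iota> \<notin> S}. fourier_coeff r f S * (\<Prod>\<kappa>\<in>S. y \<kappa>))"
    unfolding ml_partial_def sum.If_cases[OF finite_Pow_iff[THEN iffD2, OF finite_lessThan]]
    by (simp add: sum_distrib_left Collect_conj_eq Int_commute Collect_neg_eq Pow_def)
  finally show ?thesis
    by simp
qed

lemma pderiv_ml_eq_ml_partial: "pderiv_ml r f \<iota> y = ml_partial r f \<iota> y"
proof -
  have "((\<lambda>s. mlext r f (y(\<iota> := s))) has_real_derivative ml_partial r f \<iota> y) (at (y \<iota>))"
    unfolding mlext_fun_upd by (auto intro!: derivative_eq_intros)
  then show ?thesis
    unfolding pderiv_ml_def by (rule DERIV_imp_deriv)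
qed

lemma ml_partial_measurable[measurable]:
  assumes "\<And>\<kappa>. (\<lambda>\<omega>. Y \<omega> \<kappa>) \<in> borel_measurable M"
  shows "(\<lambda>\<omega>. ml_partial r f \<iota> (Y \<omega>)) \<in> borel_measurable M"
  unfolding ml_partial_def using assms by measurable

lemma Dfac_measurable[measurable]:
  assumes "\<And>\<kappa>. (\<lambda>\<omega>. Y \<omega> \<kappa>) \<in> borel_measurable M"
  shows "(\<lambda>\<omega>. Dfac r f edge b i (Y \<omega>)) \<in> borel_measurable M"
  unfolding Dfac_def pderiv_ml_eq_ml_partial using assms by measurable

lemma z_of_measurable:
  assumes Z: "Z \<in> borel_measurable M"
    and W: "\<And>s. s \<le> l \<Longrightarrow> (\<lambda>\<omega>. W \<omega> s) \<in> borel_measurable M"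
    and Fs: "\<And>k. k < l \<Longrightarrow> Fs k \<in> borel_measurable (PiM {..<k} (\<lambda>_. borel))"
  shows "(\<lambda>\<omega>. z_of Fs (Z \<omega>) (W \<omega>) l) \<in> borel_measurable M"
  unfolding z_of_def
proof (intro borel_measurable_add Z borel_measurable_sum borel_measurable_times borel_measurable_diff)
  fix s assume s: "s \<in> {1..l}"
  then show "(\<lambda>\<omega>. W \<omega> s) \<in> borel_measurable M" "(\<lambda>\<omega>. W \<omega> (s - 1)) \<in> borel_measurable M"
    using W by auto
  have "(\<lambda>\<omega>. \<lambda>q\<in>{..<s - 1}. W \<omega> (Suc q) - W \<omega> q) \<in> measurable M (PiM {..<s - 1} (\<lambda>_. borel))"
    using s W by (intro measurable_restrict borel_measurable_diff) auto
  moreover have "Fs (s - 1) \<in> borel_measurable (PiM {..<s - 1} (\<lambda>_. borel))"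
    using s Fs by auto
  ultimately show "(\<lambda>\<omega>. Fs (s - 1) (\<lambda>q\<in>{..<s - 1}. W \<omega> (Suc q) - W \<omega> q)) \<in> borel_measurable M"
    by (rule measurable_compose)
qed

context
  fixes M :: "'a measure" and Z :: "'a \<Rightarrow> nat \<Rightarrow> real" and Fto F :: "nat \<Rightarrow> (nat \<Rightarrow> real) \<Rightarrow> real"
  assumes Z: "\<And>x. (\<lambda>\<omega>. Z \<omega> x) \<in> borel_measurable M"
begin

lemma msg_tuple_measurable:
  assumes W: "\<And>s j c. s \<le> l \<Longrightarrow> (\<lambda>\<omega>. W \<omega> s j c) \<in> borel_measurable M"
    and Fto: "\<And>k. k < l \<Longrightarrow> Fto k \<in> borel_measurable (PiM {..<k} (\<lambda>_. borel))"
  shows "(\<lambda>\<omega>. msg_tuple r edge Fto (Z \<omega>) (W \<omega>) l b \<kappa>) \<in> borel_measurable M"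
  unfolding msg_tuple_def by (cases "\<kappa> < r") (simp_all add: z_of_measurable Z W Fto)

lemma wmsg_measurable:
  assumes "\<And>k. k < l \<Longrightarrow> Fto k \<in> borel_measurable (PiM {..<k} (\<lambda>_. borel))"
  shows "(\<lambda>\<omega>. wmsg r f m edge d Fto (Z \<omega>) l s i a) \<in> borel_measurable M"
  using assms
proof (induction l arbitrary: s i a)
  case (Suc l)
  have IH: "(\<lambda>\<omega>. wmsg r f m edge d Fto (Z \<omega>) l s i a) \<in> borel_measurable M" for s i a
    using Suc by auto
  have "(\<lambda>\<omega>. msg_update r f m edge d Fto (Z \<omega>) (wmsg r f m edge d Fto (Z \<omega>) l) l i a) \<in> borel_measurable M"
    unfolding msg_update_def using Suc.prems
    by (intro borel_measurable_divide borel_measurable_sum measurable_const Dfac_measurable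
        msg_tuple_measurable IH) auto
  then show ?case
    using IH by simp
qed simp

lemma zfinal_measurable:
  assumes "\<And>k. k < L \<Longrightarrow> Fto k \<in> borel_measurable (PiM {..<k} (\<lambda>_. borel))"
    and "\<And>k. k < L \<Longrightarrow> F k \<in> borel_measurable (PiM {..<k} (\<lambda>_. borel))"
  shows "(\<lambda>\<omega>. zfinal r f m edge d Fto F (Z \<omega>) L i) \<in> borel_measurable M"
proof -
  have "(\<lambda>\<omega>. wvert r f m edge d Fto (Z \<omega>) L s i) \<in> borel_measurable M" if "s \<le> L" for s
    using assms(1) that unfolding wvert_def
    by (cases "s = 0", simp)
       (intro measurable_If borel_measurable_divide borel_measurable_sum measurable_const
        Dfac_measurable msg_tuple_measurable wmsg_measurable, auto)
  then show ?thesis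
    unfolding zfinal_def by (intro z_of_measurable Z assms)
qed

end

lemma finite_pm_cube: "finite (pm_cube r)"
proof (rule finite_subset)
  show "pm_cube r \<subseteq> {x. \<forall>\<iota>. (\<iota> \<in> {..<r} \<longrightarrow> x \<iota> \<in> {1, -1}) \<and> (\<iota> \<notin> {..<r} \<longrightarrow> x \<iota> = 0)}"
    by (auto simp: pm_cube_def)
qed (intro finite_set_of_finite_funs; simp)

lemma measurable_comp_pm_cube:
  assumes V: "\<And>\<iota>. (\<lambda>\<omega>. V \<omega> \<iota>) \<in> borel_measurable M" and V_cube: "\<And>\<omega>. V \<omega> \<in> pm_cube r"
  shows "(\<lambda>\<omega>. g (V \<omega>)) \<in> borel_measurable M"
proof -
  have "V -` {x} \<inter> space M = {\<omega>\<in>space M. \<forall>\<iota>\<in>{..<r}. V \<omega> \<iota> = x \<iota>}" if "x \<in> pm_cube r" for x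
  proof -
    have "V \<omega> = x \<longleftrightarrow> (\<forall>\<iota>\<in>{..<r}. V \<omega> \<iota> = x \<iota>)" for \<omega>
    proof
      assume "\<forall>\<iota>\<in>{..<r}. V \<omega> \<iota> = x \<iota>"
      moreover have "V \<omega> \<iota> = x \<iota>" if "r \<le> \<iota>" for \<iota>
        using \<open>x \<in> pm_cube r\<close> V_cube[of \<omega>] that by (simp add: pm_cube_def)
      ultimately show "V \<omega> = x"
        by (auto simp: fun_eq_iff not_less[symmetric])
    qed simp
    then show ?thesis
      by blast
  qed
  then have "V \<in> M \<rightarrow>\<^sub>M count_space (pm_cube r)"
    using V_cube V
    by (subst measurable_count_space_eq_countable)
       (auto intro!: countable_finite finite_pm_cube sets.sets_Collect_finite_All)
  then show ?thesis
    by (rule measurable_compose) simp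
qed

lemma factor_value_measurable:
  assumes Z: "\<And>x. (\<lambda>\<omega>. fst (P \<omega>) x) \<in> borel_measurable M"
    and U: "\<And>x. (\<lambda>\<omega>. snd (P \<omega>) x) \<in> borel_measurable M"
    and Fto: "\<And>k. k < L \<Longrightarrow> Fto k \<in> borel_measurable (PiM {..<k} (\<lambda>_. borel))"
    and F: "\<And>k. k < L \<Longrightarrow> F k \<in> borel_measurable (PiM {..<k} (\<lambda>_. borel))"
  shows "(\<lambda>\<omega>. factor_value r f m edge d Fto F L (P \<omega>) a) \<in> borel_measurable M"
  unfolding factor_value_def
proof (rule measurable_comp_pm_cube[where V="\<lambda>\<omega> \<iota>. if \<iota> < r then round_R (\<lambda>i. zfinal r f m edge d Fto F (fst (P \<omega>)) L i) (snd (P \<omega>)) (edge a \<iota>) else 0"])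
  fix \<iota>
  have "(\<lambda>\<omega>. trnc (zfinal r f m edge d Fto F (fst (P \<omega>)) L j)) \<in> borel_measurable M" for j
    unfolding trnc_def using zfinal_measurable[OF Z Fto F] by measurable
  then show "(\<lambda>\<omega>. if \<iota> < r then round_R (\<lambda>i. zfinal r f m edge d Fto F (fst (P \<omega>)) L i) (snd (P \<omega>)) (edge a \<iota>) else 0)
        \<in> borel_measurable M"
    unfolding round_R_def using U by measurable
qed (auto simp: pm_cube_def round_R_def)

lemma factor_value_01:
  assumes "\<forall>x\<in>pm_cube r. f x \<in> {0, 1}"
  shows "factor_value r f m edge d Fto F L \<omega> a \<in> {0, 1}"
  unfolding factor_value_def
  by (rule assms[rule_format]) (auto simp: pm_cube_def round_R_def)

section \<open>Product probability spaces\<close>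

lemma PiM_component_borel_measurable:
  assumes "\<And>j. j \<in> I \<Longrightarrow> sets (M j) = sets borel"
  shows "(\<lambda>x. x i :: real) \<in> borel_measurable (PiM I M)"
proof (cases "i \<in> I")
  case True
  then show ?thesis
    using measurable_component_singleton[OF True, of M] measurable_cong_sets[OF refl assms] by blast
next
  case False
  have "(\<lambda>x. undefined :: real) \<in> borel_measurable (PiM I M) \<longleftrightarrow> (\<lambda>x. x i :: real) \<in> borel_measurable (PiM I M)"
  proof (rule measurable_cong)
    fix x assume "x \<in> space (PiM I M)"
    then show "undefined = x i"
      using PiE_arb[of x I "\<lambda>i. space (M i)" i] False by (simp add: space_PiM)
  qed
  then show ?thesis
    by simp
qed

lemma measurable_PiM_sum_split:
  "(\<lambda>x. (\<lambda>i\<in>A. x (Inl i), \<lambda>j\<in>B. x (Inr j)))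
     \<in> PiM (Inl ` A \<union> Inr ` B) (case_sum M N) \<rightarrow>\<^sub>M PiM A M \<Otimes>\<^sub>M PiM B N"
  using measurable_component_singleton[of "Inl _" "Inl ` A \<union> Inr ` B" "case_sum M N"]
    measurable_component_singleton[of "Inr _" "Inl ` A \<union> Inr ` B" "case_sum M N"]
  by (auto intro!: measurable_Pair measurable_restrict)

lemma distr_PiM_sum_split:
  fixes M :: "'i \<Rightarrow> 'a measure" and N :: "'j \<Rightarrow> 'a measure"
  assumes M: "\<And>i. prob_space (M i)" and N: "\<And>j. prob_space (N j)" and fin: "finite A" "finite B"
  shows "distr (PiM (Inl ` A \<union> Inr ` B) (case_sum M N)) (PiM A M \<Otimes>\<^sub>M PiM B N)
           (\<lambda>x. (\<lambda>i\<in>A. x (Inl i), \<lambda>j\<in>B. x (Inr j))) = PiM A M \<Otimes>\<^sub>M PiM B N"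
    (is "distr ?P ?Q ?split = _")
proof -
  interpret product_prob_space "case_sum M N"
    by (intro product_prob_spaceI) (simp add: M N split: sum.split)
  define P1 where "P1 = PiM (Inl ` A) (case_sum M N)"
  define P2 where "P2 = PiM (Inr ` B) (case_sum M N)"
  define \<rho>1 :: "('i + 'j \<Rightarrow> 'a) \<Rightarrow> 'i \<Rightarrow> 'a" where "\<rho>1 = (\<lambda>u. \<lambda>i\<in>A. u (Inl i))"
  define \<rho>2 :: "('i + 'j \<Rightarrow> 'a) \<Rightarrow> 'j \<Rightarrow> 'a" where "\<rho>2 = (\<lambda>u. \<lambda>j\<in>B. u (Inr j))"
  have reindex1: "distr P1 (PiM A M) \<rho>1 = PiM A M"
    using distr_PiM_reindex[of "Inl ` A" "case_sum M N" Inl A] M N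
    unfolding P1_def \<rho>1_def by (simp split: sum.split)
  have reindex2: "distr P2 (PiM B N) \<rho>2 = PiM B N"
    using distr_PiM_reindex[of "Inr ` B" "case_sum M N" Inr B] M N
    unfolding P2_def \<rho>2_def by (simp split: sum.split)
  have \<rho>1: "\<rho>1 \<in> P1 \<rightarrow>\<^sub>M PiM A M" and \<rho>2: "\<rho>2 \<in> P2 \<rightarrow>\<^sub>M PiM B N"
    unfolding P1_def P2_def \<rho>1_def \<rho>2_def
    using measurable_component_singleton[of "Inl _" "Inl ` A" "case_sum M N"]
      measurable_component_singleton[of "Inr _" "Inr ` B" "case_sum M N"]
    by (auto intro!: measurable_restrict)
  have merge: "merge (Inl ` A) (Inr ` B) \<in> P1 \<Otimes>\<^sub>M P2 \<rightarrow>\<^sub>M ?P"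
    unfolding P1_def P2_def by (rule measurable_merge)
  note split = measurable_PiM_sum_split[of A B M N]
  have "distr ?P ?Q ?split = distr (distr (P1 \<Otimes>\<^sub>M P2) ?P (merge (Inl ` A) (Inr ` B))) ?Q ?split"
    unfolding P1_def P2_def using fin by (subst distr_merge) auto
  also have "\<dots> = distr (P1 \<Otimes>\<^sub>M P2) ?Q (\<lambda>(u, v). (\<rho>1 u, \<rho>2 v))"
    by (subst distr_distr[OF split merge], rule distr_cong)
       (auto simp: \<rho>1_def \<rho>2_def merge_def space_pair_measure fun_eq_iff)
  also have "\<dots> = distr P1 (PiM A M) \<rho>1 \<Otimes>\<^sub>M distr P2 (PiM B N) \<rho>2"
    using reindex2 N fin by (intro pair_measure_distr[symmetric, OF \<rho>1 \<rho>2])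
      (auto intro!: prob_space_imp_sigma_finite prob_space_PiM)
  finally show ?thesis
    using reindex1 reindex2 by simp
qed

lemma indep_vars_PiM_restrict:
  assumes M: "\<And>i. i \<in> I \<Longrightarrow> prob_space (M i)" and "I \<noteq> {}"
    and K: "\<And>j. j \<in> J \<Longrightarrow> K j \<subseteq> I" and disj: "disjoint_family_on K J"
  shows "prob_space.indep_vars (PiM I M) (\<lambda>j. PiM (K j) M) (\<lambda>j x. restrict x (K j)) J"
proof -
  interpret prob_space "PiM I M"
    using M by (rule prob_space_PiM)
  have "indep_vars M (\<lambda>i x. x i) I"
  proof (subst indep_vars_iff_distr_eq_PiM')
    have "distr (PiM I M) (PiM I M) (\<lambda>x. \<lambda>i\<in>I. x i) = distr (PiM I M) (PiM I M) (\<lambda>x. x)"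
      by (rule distr_cong) (auto simp: space_PiM PiE_def extensional_restrict)
    also have "\<dots> = PiM I M"
      by simp
    also have "\<dots> = PiM I (\<lambda>i. distr (PiM I M) (M i) (\<lambda>x. x i))"
      using M by (intro PiM_cong refl distr_PiM_component[symmetric]) auto
    finally show "distr (PiM I M) (PiM I M) (\<lambda>x. \<lambda>i\<in>I. x i) = PiM I (\<lambda>i. distr (PiM I M) (M i) (\<lambda>x. x i))" .
  qed (use \<open>I \<noteq> {}\<close> in auto)
  from indep_vars_restrict[OF this K disj] show ?thesis
    by simp
qed

lemma (in prob_space) Hoeffding_abs_sum_01:
  assumes fin: "finite C" and N: "card C \<le> N" and indep: "indep_vars (\<lambda>_. borel) X C"
    and X01: "\<And>a x. a \<in> C \<Longrightarrow> X a x \<in> {0..1}" and \<epsilon>: "0 \<le> \<epsilon>"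
  shows "prob {x\<in>space M. \<epsilon> \<le> \<bar>\<Sum>a\<in>C. X a x - expectation (X a)\<bar>} \<le> 2 * exp (- 2 * \<epsilon>\<^sup>2 / N)"
proof (cases "C = {}")
  case True
  then show ?thesis
    using \<epsilon> prob_le_1 by (cases "\<epsilon> = 0") (auto intro: order_trans)
next
  case False
  interpret Hoeffding_ineq M C X "\<lambda>_. 0" "\<lambda>_. 1" "\<Sum>a\<in>C. expectation (X a)"
    by unfold_locales (use fin indep X01 in auto)
  have C: "0 < real (card C)"
    using False fin by (simp add: card_gt_0_iff)
  have "prob {x\<in>space M. \<epsilon> \<le> \<bar>\<Sum>a\<in>C. X a x - expectation (X a)\<bar>} \<le> 2 * exp (- 2 * \<epsilon>\<^sup>2 / card C)"
    using Hoeffding_ineq_abs_ge[of \<epsilon>] \<epsilon> C by (simp add: sum_subtractf)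
  also have "\<dots> \<le> 2 * exp (- 2 * \<epsilon>\<^sup>2 / N)"
    using C N by (simp add: frac_le)
  finally show ?thesis .
qed

section \<open>Greedy colouring and a union bound over colour classes\<close>

lemma greedy_colouring:
  fixes G :: "'a set" and c :: "'a \<Rightarrow> 'a \<Rightarrow> bool" and K :: nat
  assumes fin: "finite G" and sym: "\<And>x y. c x y \<Longrightarrow> c y x"
    and deg: "\<And>x. x \<in> G \<Longrightarrow> card {y\<in>G. y \<noteq> x \<and> c x y} < K"
  shows "\<exists>col. (\<forall>x\<in>G. col x < K) \<and> (\<forall>x\<in>G. \<forall>y\<in>G. x \<noteq> y \<and> c x y \<longrightarrow> col x \<noteq> col y)"
proof -
  have "\<exists>col. (\<forall>x\<in>S. col x < K) \<and> (\<forall>x\<in>S. \<forall>y\<in>S. x \<noteq> y \<and> c x y \<longrightarrow> col x \<noteq> col y)"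
    if "S \<subseteq> G" for S
    using finite_subset[OF that fin] that
  proof (induction S rule: finite_induct)
    case (insert x F)
    then obtain col where col: "\<forall>x\<in>F. col x < K" "\<forall>x\<in>F. \<forall>y\<in>F. x \<noteq> y \<and> c x y \<longrightarrow> col x \<noteq> col y"
      by auto
    have "card (col ` {y\<in>F. c x y}) \<le> card {y\<in>F. c x y}"
      using insert.hyps by (intro card_image_le) simp
    also have "\<dots> \<le> card {y\<in>G. y \<noteq> x \<and> c x y}"
      using insert fin by (intro card_mono) auto
    also have "\<dots> < card {..<K}"
      using deg insert.prems by simp
    finally have "\<not> {..<K} \<subseteq> col ` {y\<in>F. c x y}"
      using card_mono[of "col ` {y\<in>F. c x y}" "{..<K}"] insert.hyps(1) by auto
    then obtain k where k: "k < K" "\<And>y. y \<in> F \<Longrightarrow> c x y \<Longrightarrow> col y \<noteq> k"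
      by blast
    show ?case
    proof (intro exI[of _ "col(x := k)"] conjI ballI impI)
      fix y z assume "y \<in> insert x F" "z \<in> insert x F" "y \<noteq> z \<and> c y z"
      then show "(col(x := k)) y \<noteq> (col(x := k)) z"
        using col k sym[of y z] insert.hyps(2) by (cases "y = x"; cases "z = x") auto
    qed (use col k in auto)
  qed simp
  then show ?thesis
    by blast
qed

lemma (in prob_space) prob_abs_sum_ge_colour_classes:
  fixes Y :: "'i \<Rightarrow> 'a \<Rightarrow> real" and col :: "'i \<Rightarrow> nat"
  assumes fin: "finite A" and meas: "\<And>a. a \<in> A \<Longrightarrow> Y a \<in> borel_measurable M"
    and col: "\<And>a. a \<in> A \<Longrightarrow> col a < K" and K: "0 < K"
    and classes: "\<And>j. j < K \<Longrightarrow>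
        prob {x\<in>space M. \<epsilon> / K \<le> \<bar>\<Sum>a\<in>{a\<in>A. col a = j}. Y a x\<bar>} \<le> B"
  shows "prob {x\<in>space M. \<epsilon> \<le> \<bar>\<Sum>a\<in>A. Y a x\<bar>} \<le> K * B"
proof -
  define E where "E j = {x\<in>space M. \<epsilon> / K \<le> \<bar>\<Sum>a\<in>{a\<in>A. col a = j}. Y a x\<bar>}" for j
  have E: "E j \<in> sets M" for j
    unfolding E_def using meas by measurable
  have "{x\<in>space M. \<epsilon> \<le> \<bar>\<Sum>a\<in>A. Y a x\<bar>} \<subseteq> (\<Union>j<K. E j)"
  proof (rule subsetI, rule ccontr)
    fix x assume x: "x \<in> {x\<in>space M. \<epsilon> \<le> \<bar>\<Sum>a\<in>A. Y a x\<bar>}" "x \<notin> (\<Union>j<K. E j)"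
    have "(\<Sum>a\<in>A. Y a x) = (\<Sum>j<K. \<Sum>a\<in>{a\<in>A. col a = j}. Y a x)"
      using fin col by (intro sum.group[symmetric]) auto
    then have "\<bar>\<Sum>a\<in>A. Y a x\<bar> \<le> (\<Sum>j<K. \<bar>\<Sum>a\<in>{a\<in>A. col a = j}. Y a x\<bar>)"
      by simp
    also have "\<dots> < (\<Sum>j<K. \<epsilon> / K)"
      using K x by (intro sum_strict_mono) (auto simp: E_def not_le)
    finally show False
      using x K by simp
  qed
  then have "prob {x\<in>space M. \<epsilon> \<le> \<bar>\<Sum>a\<in>A. Y a x\<bar>} \<le> prob (\<Union>j<K. E j)"
    using E by (intro finite_measure_mono) auto
  also have "\<dots> \<le> (\<Sum>j<K. prob (E j))"
    using E by (intro finite_measure_subadditive_finite) auto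
  also have "\<dots> \<le> K * B"
    using sum_mono[of "{..<K}" "\<lambda>j. prob (E j)" "\<lambda>_. B"] classes by (simp add: E_def)
  finally show ?thesis .
qed

section \<open>Concentration of the rounded factor values\<close>

definition gauss :: "real \<Rightarrow> real measure" where
  "gauss \<delta> = density lborel (normal_density 0 (sqrt \<delta>))"

definition unif01 :: "real measure" where
  "unif01 = uniform_measure lborel {0..1}"

text \<open>The Gaussian and the rounding uniform of vertex \<open>i\<close> become the coordinates \<open>Inl i\<close> and
  \<open>Inr i\<close> of a single product space, in which disjoint blocks of coordinates are independent.\<close>

definition vertex_space :: "real \<Rightarrow> nat \<Rightarrow> (nat + nat \<Rightarrow> real) measure" where
  "vertex_space \<delta> n = PiM (Inl ` {..<n} \<union> Inr ` {..<n}) (case_sum (\<lambda>_. gauss \<delta>) (\<lambda>_. unif01))"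

definition split_sample :: "nat \<Rightarrow> (nat + nat \<Rightarrow> real) \<Rightarrow> (nat \<Rightarrow> real) \<times> (nat \<Rightarrow> real)" where
  "split_sample n x = (\<lambda>i\<in>{..<n}. x (Inl i), \<lambda>i\<in>{..<n}. x (Inr i))"

lemma prob_space_gauss: "0 < \<delta> \<Longrightarrow> prob_space (gauss \<delta>)"
  unfolding gauss_def by (rule prob_space_normal_density) simp

lemma prob_space_unif01: "prob_space unif01"
  unfolding unif01_def by (rule prob_space_uniform_measure) auto

lemma prob_space_vertex_space: "0 < \<delta> \<Longrightarrow> prob_space (vertex_space \<delta> n)"
  unfolding vertex_space_def by (intro prob_space_PiM) (auto simp: prob_space_gauss prob_space_unif01 split: sum.split)

lemma alg_space_eq: "alg_space \<delta> n = PiM {..<n} (\<lambda>_. gauss \<delta>) \<Otimes>\<^sub>M PiM {..<n} (\<lambda>_. unif01)"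
  unfolding alg_space_def gauss_def unif01_def ..

lemma prob_space_alg_space: "0 < \<delta> \<Longrightarrow> prob_space (alg_space \<delta> n)"
  unfolding alg_space_eq by (intro prob_space_pair prob_space_PiM prob_space_gauss prob_space_unif01)

lemma split_sample_measurable: "split_sample n \<in> vertex_space \<delta> n \<rightarrow>\<^sub>M alg_space \<delta> n"
  unfolding split_sample_def[abs_def] vertex_space_def alg_space_eq
  by (rule measurable_PiM_sum_split)

lemma alg_space_eq_distr:
  assumes "0 < \<delta>"
  shows "alg_space \<delta> n = distr (vertex_space \<delta> n) (alg_space \<delta> n) (split_sample n)"
  unfolding split_sample_def[abs_def] vertex_space_def alg_space_eq
  by (rule distr_PiM_sum_split[symmetric]) (simp_all add: prob_space_gauss prob_space_unif01 assms)

lemma split_sample_component_measurable: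
  "(\<lambda>y. fst (split_sample n y) v) \<in> borel_measurable (PiM K (case_sum (\<lambda>_. gauss \<delta>) (\<lambda>_. unif01)))"
  "(\<lambda>y. snd (split_sample n y) v) \<in> borel_measurable (PiM K (case_sum (\<lambda>_. gauss \<delta>) (\<lambda>_. unif01)))"
  by (cases "v < n"; simp add: split_sample_def PiM_component_borel_measurable gauss_def unif01_def
      split: sum.split)+

lemma factor_value_alg_measurable:
  assumes "\<And>k. k < L \<Longrightarrow> Fto k \<in> borel_measurable (PiM {..<k} (\<lambda>_. borel))"
    and "\<And>k. k < L \<Longrightarrow> F k \<in> borel_measurable (PiM {..<k} (\<lambda>_. borel))"
  shows "(\<lambda>\<omega>. factor_value r f m edge d Fto F L \<omega> a) \<in> borel_measurable (alg_space \<delta> n)"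
proof -
  have "(\<lambda>\<omega>. fst \<omega> x) \<in> borel_measurable (alg_space \<delta> n)" "(\<lambda>\<omega>. snd \<omega> x) \<in> borel_measurable (alg_space \<delta> n)" for x
    unfolding alg_space_eq
    by (auto intro!: measurable_compose[OF measurable_fst] measurable_compose[OF measurable_snd]
        PiM_component_borel_measurable simp: gauss_def unif01_def)
  from factor_value_measurable[where P="\<lambda>\<omega>. \<omega>", OF this assms] show ?thesis
    by simp
qed

lemma factor_class_concentration:
  fixes f :: "(nat \<Rightarrow> real) \<Rightarrow> real" and d :: nat
  assumes f01: "\<forall>x\<in>pm_cube r. f x \<in> {0, 1}" and r: "0 < r" and \<delta>: "0 < \<delta>" and n: "0 < n"
    and Fto: "\<And>k. k < L \<Longrightarrow> Fto k \<in> borel_measurable (PiM {..<k} (\<lambda>_. borel))"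
    and F: "\<And>k. k < L \<Longrightarrow> F k \<in> borel_measurable (PiM {..<k} (\<lambda>_. borel))"
    and C: "C \<subseteq> {..<m}"
    and disj: "\<And>a a'. a \<in> C \<Longrightarrow> a' \<in> C \<Longrightarrow> a \<noteq> a' \<Longrightarrow>
        fg_ball r m edge (Suc (Suc L)) (edge a 0) \<inter> fg_ball r m edge (Suc (Suc L)) (edge a' 0) = {}"
    and \<epsilon>: "0 \<le> \<epsilon>"
  defines "X a x \<equiv> factor_value r f m edge d Fto F L (split_sample n x) a"
  shows "measure (vertex_space \<delta> n)
           {x\<in>space (vertex_space \<delta> n). \<epsilon> \<le> \<bar>\<Sum>a\<in>C. X a x - integral\<^sup>L (vertex_space \<delta> n) (X a)\<bar>}
         \<le> 2 * exp (- 2 * \<epsilon>\<^sup>2 / m)"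
proof -
  define T :: "nat + nat \<Rightarrow> real measure" where "T = case_sum (\<lambda>_. gauss \<delta>) (\<lambda>_. unif01)"
  define B where "B a = fg_ball r m edge (Suc (Suc L)) (edge a 0) \<inter> {..<n}" for a
  define Ks where "Ks a = Inl ` B a \<union> Inr ` B a" for a
  define X' where "X' a x = X a (restrict x (Ks a))" for a x
  interpret prob_space "vertex_space \<delta> n"
    using \<delta> by (rule prob_space_vertex_space)
  have local: "X a = X' a" if "a \<in> C" for a
  proof
    fix x
    show "X a x = X' a x"
      unfolding X'_def X_def
    proof (rule factor_value_local[OF _ r], use C that in blast, intro ballI conjI)
      fix v assume "v \<in> fg_ball r m edge (Suc (Suc L)) (edge a 0)"
      then show "fst (split_sample n x) v = fst (split_sample n (restrict x (Ks a))) v"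
        and "snd (split_sample n x) v = snd (split_sample n (restrict x (Ks a))) v"
        by (simp_all add: split_sample_def Ks_def B_def)
    qed
  qed
  have "disjoint_family_on B C"
    using disj by (fastforce simp: disjoint_family_on_def B_def simp del: fg_ball.simps)
  then have "disjoint_family_on Ks C"
    by (auto simp: disjoint_family_on_def Ks_def)
  then have "indep_vars (\<lambda>a. PiM (Ks a) T) (\<lambda>a x. restrict x (Ks a)) C"
    unfolding vertex_space_def T_def
    by (rule indep_vars_PiM_restrict[rotated 3])
       (use n in \<open>auto simp: prob_space_gauss prob_space_unif01 \<delta> Ks_def B_def split: sum.split\<close>)
  moreover have "X a \<in> borel_measurable (PiM (Ks a) T)" for a
    unfolding X_def T_def
    by (intro factor_value_measurable split_sample_component_measurable Fto F)
  ultimately have "indep_vars (\<lambda>_. borel) X' C"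
    unfolding X'_def by (rule indep_vars_compose2)
  moreover have "X' a x \<in> {0..1}" for a x
  proof -
    have "X' a x \<in> {0, 1}"
      unfolding X'_def X_def by (rule factor_value_01[OF f01])
    then show ?thesis
      by auto
  qed
  ultimately have "prob {x\<in>space (vertex_space \<delta> n). \<epsilon> \<le> \<bar>\<Sum>a\<in>C. X' a x - expectation (X' a)\<bar>}
      \<le> 2 * exp (- 2 * \<epsilon>\<^sup>2 / m)"
    using finite_subset[OF C] card_mono[OF _ C] \<epsilon> by (intro Hoeffding_abs_sum_01) auto
  moreover have "(\<Sum>a\<in>C. X a x - expectation (X a)) = (\<Sum>a\<in>C. X' a x - expectation (X' a))" for x
    using local by (intro sum.cong) auto
  ultimately show ?thesis
    by simp
qed

lemma factor_colouring:
  assumes reg: "index_regular r d n m edge" and r: "0 < r" and K: "(1 + d * r) ^ (2 * R) * (d div r) < K"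
  obtains col where "\<And>a. a < m \<Longrightarrow> col a < K"
    and "\<And>a a'. a < m \<Longrightarrow> a' < m \<Longrightarrow> a \<noteq> a' \<Longrightarrow> col a = col a' \<Longrightarrow>
           fg_ball r m edge R (edge a 0) \<inter> fg_ball r m edge R (edge a' 0) = {}"
proof -
  define meets where "meets a a' \<longleftrightarrow> fg_ball r m edge R (edge a 0) \<inter> fg_ball r m edge R (edge a' 0) \<noteq> {}" for a a'
  have deg: "card {a'\<in>{..<m}. a' \<noteq> a \<and> meets a a'} < K" for a
  proof -
    have "{a'\<in>{..<m}. a' \<noteq> a \<and> meets a a'} \<subseteq>
        (\<Union>u\<in>fg_ball r m edge (R + R) (edge a 0). {a'. a' < m \<and> edge a' 0 = u})"
    proof
      fix a' assume a': "a' \<in> {a'\<in>{..<m}. a' \<noteq> a \<and> meets a a'}"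
      then obtain u where "u \<in> fg_ball r m edge R (edge a 0)" "u \<in> fg_ball r m edge R (edge a' 0)"
        unfolding meets_def by blast
      then have "edge a' 0 \<in> fg_ball r m edge (R + R) (edge a 0)"
        by (rule fg_balls_intersect)
      with a' show "a' \<in> (\<Union>u\<in>fg_ball r m edge (R + R) (edge a 0). {a'. a' < m \<and> edge a' 0 = u})"
        by blast
    qed
    then have "card {a'\<in>{..<m}. a' \<noteq> a \<and> meets a a'}
        \<le> card (\<Union>u\<in>fg_ball r m edge (R + R) (edge a 0). {a'. a' < m \<and> edge a' 0 = u})"
      by (intro card_mono finite_UN_I finite_fg_ball) auto
    also have "\<dots> \<le> (\<Sum>u\<in>fg_ball r m edge (R + R) (edge a 0). card {a'. a' < m \<and> edge a' 0 = u})"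
      by (rule card_UN_le[OF finite_fg_ball])
    also have "\<dots> \<le> card (fg_ball r m edge (R + R) (edge a 0)) * (d div r)"
      using sum_mono[OF card_factors_at_le[OF reg r]] by simp
    also have "\<dots> \<le> (1 + d * r) ^ (2 * R) * (d div r)"
      using card_fg_ball_le[OF reg] by (simp add: mult_2)
    finally show ?thesis
      using K by linarith
  qed
  have sym: "meets a a' \<Longrightarrow> meets a' a" for a a'
    by (auto simp: meets_def)
  obtain col where col: "\<forall>a\<in>{..<m}. col a < K"
    and proper: "\<forall>a\<in>{..<m}. \<forall>a'\<in>{..<m}. a \<noteq> a' \<and> meets a a' \<longrightarrow> col a \<noteq> col a'"
    using greedy_colouring[OF finite_lessThan sym deg] by blast
  show ?thesis
  proof (rule that)
    show "col a < K" if "a < m" for a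
      using col that by blast
    show "fg_ball r m edge R (edge a 0) \<inter> fg_ball r m edge R (edge a' 0) = {}"
      if "a < m" "a' < m" "a \<noteq> a'" "col a = col a'" for a a'
      using proper that unfolding meets_def by blast
  qed
qed

lemma factor_sum_concentration:
  fixes f :: "(nat \<Rightarrow> real) \<Rightarrow> real" and t \<delta> :: real
  assumes f01: "\<forall>x\<in>pm_cube r. f x \<in> {0, 1}" and r: "0 < r" and \<delta>: "0 < \<delta>"
    and Fto: "\<And>k. k < L \<Longrightarrow> Fto k \<in> borel_measurable (PiM {..<k} (\<lambda>_. borel))"
    and F: "\<And>k. k < L \<Longrightarrow> F k \<in> borel_measurable (PiM {..<k} (\<lambda>_. borel))"
    and reg: "index_regular r d n m edge" and t: "0 \<le> t"
  defines "K \<equiv> (1 + d * r) ^ (2 * Suc (Suc L)) * (d div r) + 1 :: nat"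
  shows "measure (alg_space \<delta> n)
           {\<omega> \<in> space (alg_space \<delta> n). t * m \<le> \<bar>\<Sum>a<m. factor_value r f m edge d Fto F L \<omega> a
               - (\<integral>\<omega>'. factor_value r f m edge d Fto F L \<omega>' a \<partial>alg_space \<delta> n)\<bar>}
         \<le> 2 * real K * exp (- 2 * t\<^sup>2 * m / (real K)\<^sup>2)"
proof (cases "n = 0")
  case True
  then have "m = 0"
    using num_factors_eq[OF reg r] by simp
  interpret prob_space "alg_space \<delta> n"
    using \<delta> by (rule prob_space_alg_space)
  have "1 \<le> 2 * real K * exp (- 2 * t\<^sup>2 * m / (real K)\<^sup>2)"
    using \<open>m = 0\<close> by (simp add: K_def)
  with prob_le_1 show ?thesis
    by (rule order_trans)
next
  case False
  define X where "X a x = factor_value r f m edge d Fto F L (split_sample n x) a" for a x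
  interpret prob_space "vertex_space \<delta> n"
    using \<delta> by (rule prob_space_vertex_space)
  have fv_meas: "(\<lambda>\<omega>. factor_value r f m edge d Fto F L \<omega> a) \<in> borel_measurable (alg_space \<delta> n)" for a
    by (rule factor_value_alg_measurable[OF Fto F])
  have X_meas: "X a \<in> borel_measurable (vertex_space \<delta> n)" for a
    unfolding X_def by (rule measurable_compose[OF split_sample_measurable fv_meas])
  have expect: "(\<integral>\<omega>. factor_value r f m edge d Fto F L \<omega> a \<partial>alg_space \<delta> n) = expectation (X a)" for a
    unfolding X_def by (subst alg_space_eq_distr[OF \<delta>]) (rule integral_distr[OF split_sample_measurable fv_meas])
  have "(1 + d * r) ^ (2 * Suc (Suc L)) * (d div r) < K"
    by (simp only: K_def)
  then obtain col where col: "\<And>a. a < m \<Longrightarrow> col a < K"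
    and disj: "\<And>a a'. a < m \<Longrightarrow> a' < m \<Longrightarrow> a \<noteq> a' \<Longrightarrow> col a = col a' \<Longrightarrow>
           fg_ball r m edge (Suc (Suc L)) (edge a 0) \<inter> fg_ball r m edge (Suc (Suc L)) (edge a' 0) = {}"
    using factor_colouring[OF reg r] by blast
  let ?E = "{\<omega> \<in> space (alg_space \<delta> n). t * m \<le> \<bar>\<Sum>a<m. factor_value r f m edge d Fto F L \<omega> a
               - (\<integral>\<omega>'. factor_value r f m edge d Fto F L \<omega>' a \<partial>alg_space \<delta> n)\<bar>}"
  have "?E \<in> sets (alg_space \<delta> n)"
    using fv_meas by measurable
  then have "measure (alg_space \<delta> n) ?E = measure (vertex_space \<delta> n) (split_sample n -` ?E \<inter> space (vertex_space \<delta> n))"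
    by (subst alg_space_eq_distr[OF \<delta>]) (rule measure_distr[OF split_sample_measurable])
  also have "split_sample n -` ?E \<inter> space (vertex_space \<delta> n)
      = {x \<in> space (vertex_space \<delta> n). t * m \<le> \<bar>\<Sum>a<m. X a x - expectation (X a)\<bar>}"
    using measurable_space[OF split_sample_measurable] by (auto simp: expect X_def)
  also have "prob \<dots> \<le> real K * (2 * exp (- 2 * (t * m / K)\<^sup>2 / m))"
  proof (rule prob_abs_sum_ge_colour_classes)
    fix j assume "j < K"
    show "prob {x\<in>space (vertex_space \<delta> n). t * m / K \<le> \<bar>\<Sum>a\<in>{a\<in>{..<m}. col a = j}. X a x - expectation (X a)\<bar>}
        \<le> 2 * exp (- 2 * (t * m / K)\<^sup>2 / m)"
      unfolding X_def using False t disj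
      by (intro factor_class_concentration[OF f01 r \<delta> _ Fto F]) auto
  qed (use X_meas col in \<open>auto simp: K_def\<close>)
  also have "\<dots> = 2 * real K * exp (- 2 * t\<^sup>2 * m / (real K)\<^sup>2)"
    by (cases "m = 0") (simp_all add: power2_eq_square)
  finally show ?thesis .
qed

lemma exp_tail_weaken:
  fixes K m n t :: real
  assumes K: "1 \<le> K" and nm: "n \<le> m" and n: "0 \<le> n"
  shows "2 * K * exp (- 2 * t\<^sup>2 * m / K\<^sup>2) \<le> (2 * K + K\<^sup>2) * exp (- (n * t\<^sup>2) / (2 * (2 * K + K\<^sup>2)))"
proof (rule mult_mono)
  have K2: "0 < K\<^sup>2" "K\<^sup>2 \<le> 2 * K + K\<^sup>2" "0 < 2 * K + K\<^sup>2"
    using K by (simp_all add: add_pos_nonneg)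
  have "n * t\<^sup>2 / (2 * (2 * K + K\<^sup>2)) \<le> n * t\<^sup>2 / (2 * K\<^sup>2)"
    using K K2 n by (intro divide_left_mono mult_pos_pos) auto
  also have "\<dots> \<le> 2 * t\<^sup>2 * m / K\<^sup>2"
  proof -
    have "n * t\<^sup>2 \<le> m * (4 * t\<^sup>2)"
      using nm n by (intro mult_mono) auto
    then show ?thesis
      using K2 by (simp add: field_simps)
  qed
  finally show "exp (- 2 * t\<^sup>2 * m / K\<^sup>2) \<le> exp (- (n * t\<^sup>2) / (2 * (2 * K + K\<^sup>2)))"
    by simp
qed (use K in auto)

lemma normalised_factor_sum_tail:
  fixes f :: "(nat \<Rightarrow> real) \<Rightarrow> real" and t \<delta> :: real
  assumes f01: "\<forall>x\<in>pm_cube r. f x \<in> {0, 1}" and r: "0 < r" and \<delta>: "0 < \<delta>"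
    and Fto: "\<And>k. k < L \<Longrightarrow> Fto k \<in> borel_measurable (PiM {..<k} (\<lambda>_. borel))"
    and F: "\<And>k. k < L \<Longrightarrow> F k \<in> borel_measurable (PiM {..<k} (\<lambda>_. borel))"
    and reg: "index_regular r d n m edge" and t: "0 \<le> t"
  defines "N \<equiv> (1 + d * r) ^ (2 * Suc (Suc L)) * (d div r) + 1 :: nat"
  defines "C \<equiv> 2 * real N + (real N)\<^sup>2"
  shows "measure (alg_space \<delta> n)
          {\<omega> \<in> space (alg_space \<delta> n).
             \<bar>(1 / ((real d / real r) * real n)) *
               (\<Sum>a<m. factor_value r f m edge d Fto F L \<omega> a
                  - (\<integral>\<omega>'. factor_value r f m edge d Fto F L \<omega>' a \<partial>alg_space \<delta> n))\<bar> \<ge> t}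
        \<le> C * exp (- (real n * t\<^sup>2) / (2 * C))"
proof -
  interpret prob_space "alg_space \<delta> n"
    using \<delta> by (rule prob_space_alg_space)
  have N: "1 \<le> real N" and C: "1 \<le> C"
    by (simp_all add: N_def C_def)
  have m: "m = n * (d div r)"
    by (rule num_factors_eq[OF reg r])
  have "(real d / real r) * real n = real m"
    using reg m by (simp add: index_regular_def real_of_nat_div)
  show ?thesis
  proof (cases "m = 0")
    case True
    then show ?thesis
      using C prob_le_1 t by (cases "t = 0") (auto intro: order_trans)
  next
    case False
    have "{\<omega> \<in> space (alg_space \<delta> n).
           \<bar>(1 / ((real d / real r) * real n)) *
             (\<Sum>a<m. factor_value r f m edge d Fto F L \<omega> a
                - (\<integral>\<omega>'. factor_value r f m edge d Fto F L \<omega>' a \<partial>alg_space \<delta> n))\<bar> \<ge> t}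
        = {\<omega> \<in> space (alg_space \<delta> n). t * m \<le> \<bar>\<Sum>a<m. factor_value r f m edge d Fto F L \<omega> a
             - (\<integral>\<omega>'. factor_value r f m edge d Fto F L \<omega>' a \<partial>alg_space \<delta> n)\<bar>}"
      using \<open>(real d / real r) * real n = real m\<close> False by (auto simp: abs_mult field_simps)
    also have "measure (alg_space \<delta> n) \<dots> \<le> 2 * real N * exp (- 2 * t\<^sup>2 * m / (real N)\<^sup>2)"
      unfolding N_def by (rule factor_sum_concentration[OF f01 r \<delta> Fto F reg t])
    also have "\<dots> \<le> C * exp (- (real n * t\<^sup>2) / (2 * C))"
      unfolding C_def using N False m by (intro exp_tail_weaken) auto
    finally show ?thesis .
  qed
qed

theorem mainTheorem18:
  fixes r d :: nat and f :: "(nat \<Rightarrow> real) \<Rightarrow> real" and \<delta> K :: real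
    and Fto F :: "nat \<Rightarrow> (nat \<Rightarrow> real) \<Rightarrow> real"
  assumes r2: "2 \<le> r"
    and f01: "\<forall>x\<in>pm_cube r. f x \<in> {0, 1}"
    and fdeg1: "\<forall>S. S \<subseteq> {..<r} \<and> card S = 1 \<longrightarrow> fourier_coeff r f S = 0"
    and delta: "0 < \<delta>"
    and Kpos: "0 < K"
    and Fmeas: "\<forall>l < nat \<lfloor>1 / \<delta>\<rfloor>.
                  Fto l \<in> borel_measurable (PiM {..<l} (\<lambda>_. borel)) \<and>
                  F l \<in> borel_measurable (PiM {..<l} (\<lambda>_. borel))"
    and Fbdd: "\<forall>l < nat \<lfloor>1 / \<delta>\<rfloor>. \<forall>x \<in> PiE {..<l} (\<lambda>_. UNIV).
                  \<bar>Fto l x\<bar> \<le> K \<and> \<bar>F l x\<bar> \<le> K"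
  shows "\<exists>C>0. \<forall>n m (edge :: nat \<Rightarrow> nat \<Rightarrow> nat).
           index_regular r d n m edge \<and>
           fg_girth_ge r n m edge (4 * nat \<lfloor>1 / \<delta>\<rfloor> + 4) \<longrightarrow>
           (\<forall>t::real. 0 \<le> t \<longrightarrow>
              measure (alg_space \<delta> n)
                {\<omega> \<in> space (alg_space \<delta> n).
                   \<bar>(1 / ((real d / real r) * real n)) *
                     (\<Sum>a<m. factor_value r f m edge d Fto F (nat \<lfloor>1 / \<delta>\<rfloor>) \<omega> a
                        - (\<integral>\<omega>'. factor_value r f m edge d Fto F (nat \<lfloor>1 / \<delta>\<rfloor>) \<omega>' a
                              \<partial>alg_space \<delta> n))\<bar> \<ge> t}
              \<le> C * exp (- (real n * t\<^sup>2) / (2 * C)))"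
proof -
  define L where "L = nat \<lfloor>1 / \<delta>\<rfloor>"
  define N :: nat where "N = (1 + d * r) ^ (2 * Suc (Suc L)) * (d div r) + 1"
  define C where "C = 2 * real N + (real N)\<^sup>2"
  have r: "0 < r"
    using r2 by simp
  have Fto: "Fto l \<in> borel_measurable (PiM {..<l} (\<lambda>_. borel))"
    and F: "F l \<in> borel_measurable (PiM {..<l} (\<lambda>_. borel))" if "l < L" for l
    using Fmeas that by (simp_all add: L_def)
  have "0 < C"
    by (simp add: C_def N_def add_pos_nonneg)
  with normalised_factor_sum_tail[OF f01 r delta Fto F] show ?thesis
    unfolding L_def[symmetric] by (intro exI[of _ C]) (simp add: C_def N_def)
qed

end
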